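(* Let $g_n(y)=\sum_{[\pi]\in\mathfrak{C}_{n}^o}y^{\operatorname{drop}_{eo}([\pi])}$. Then $g_1=1$ and for every $n\ge1$: (i) $g_{2n}=nyg_{2n-1}-y^2\frac{d}{dy}g_{2n-1}+y\frac{d}{dy}g_{2n-1}$; (ii) $g_{2n+1}=ng_{2n}-y\frac{d}{dy}g_{2n}+\frac{d}{dy}g_{2n}$.
   Context: For $n\ge1$, a cycle on $[n]=\{1,\dots,n\}$ is an equivalence class $[\pi]$ of permutations $\pi=\pi_1\cdots\pi_n$ of $[n]$ (in one-line notation) under cyclic rotation of the entries; the set of cycles on $[n]$ is $\mathfrak{C}_n$. Each cycle is represented by the permutation $\pi$ with $\pi_1=1$, and indices are read modulo $n$. A drop of $[\pi]$ is a consecutive pair $(\pi_i,\pi_{i+1})$, $1\le i\le n$, with $\pi_i>\pi_{i+1}$. By convention, the unique cycle $[(1)]\in\mathfrak{C}_1$ has exactly one drop $(\star,1)$, where $\star$ is considered neither even nor odd. A drop $(a,b)$ is even-odd if $a$ is even and $b$ is odd; $\operatorname{drop}_{eo}([\pi])$ is the number of even-odd drops of $[\pi]$. $\mathfrak{C}_n^o$ is the set of cycles $[\pi]\in\mathfrak{C}_n$ such that for every drop $(\pi_i,\pi_{i+1})$, the entry $\pi_{i+1}$ is odd. *)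

theory Defs
  imports "HOL-Computational_Algebra.Polynomial"
begin

text \<open>A cycle on [n] is represented by its unique representative permutation
  (in one-line notation, as a list) whose first entry is 1.\<close>
definition cycles :: "nat \<Rightarrow> nat list set" where
  "cycles n = {xs. distinct xs \<and> set xs = {1..n} \<and> hd xs = 1}"

definition is_drop :: "nat list \<Rightarrow> nat \<Rightarrow> bool" where
  "is_drop xs i \<longleftrightarrow> xs ! ((i + 1) mod length xs) < xs ! i"

text \<open>Number of even-odd drops. For n = 1 the unique drop is (star,1),
  which is not even-odd.\<close>
definition drop_eo :: "nat list \<Rightarrow> nat" where
  "drop_eo xs = (if length xs = 1 then 0 else
     card {i. i < length xs \<and> is_drop xs i \<and> even (xs ! i)
              \<and> odd (xs ! ((i + 1) mod length xs))})"

text \<open>Cycles all of whose drops end in an odd entry. For n = 1 the unique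
  drop (star,1) ends in the odd entry 1.\<close>
definition cycles_o :: "nat \<Rightarrow> nat list set" where
  "cycles_o n = {xs \<in> cycles n.
     (length xs = 1 \<longrightarrow> odd (1::nat)) \<and>
     (length xs \<noteq> 1 \<longrightarrow> (\<forall>i < length xs. is_drop xs i \<longrightarrow> odd (xs ! ((i + 1) mod length xs))))}"

definition g :: "nat \<Rightarrow> int poly" where
  "g n = (\<Sum>xs \<in> cycles_o n. monom 1 (drop_eo xs))"

end

theory Submission
  imports Defs
begin

text \<open>Deleting the largest entry \<open>L + 1\<close> from a cycle in \<open>\<CC>\<^sup>o\<^sub>L\<^sub>+\<^sub>1\<close> leaves a cycle
  in \<open>\<CC>\<^sup>o\<^sub>L\<close>. Conversely, \<open>L + 1\<close> may be inserted into a cycle of \<open>\<CC>\<^sup>o\<^sub>L\<close> exactly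
  between consecutive entries \<open>a, b\<close> with \<open>b\<close> odd, because \<open>(L + 1, b)\<close> is a drop; there is
  one such slot per odd value, i.e. \<open>n = \<lceil>L/2\<rceil>\<close> of them. Replacing \<open>(a, b)\<close> by
  \<open>(a, L + 1), (L + 1, b)\<close> destroys an even-odd drop iff \<open>(a, b)\<close> was one and creates one iff
  \<open>L + 1\<close> is even. Hence a cycle with \<open>d\<close> even-odd drops contributes
  \<open>d y\<^bsup>d-1+e\<^esup> + (n - d) y\<^bsup>d+e\<^esup>\<close> to \<open>g\<^sub>L\<^sub>+\<^sub>1\<close>, where \<open>e = 1\<close> if \<open>L + 1\<close> is even and
  \<open>e = 0\<close> otherwise; this is the stated differential operator applied to \<open>y\<^sup>d\<close>.\<close>

definition cyclic_pairs :: "'a list \<Rightarrow> ('a \<times> 'a) list" where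
  "cyclic_pairs xs = zip xs (rotate1 xs)"

definition eo_drop :: "nat \<times> nat \<Rightarrow> bool" where
  "eo_drop p \<longleftrightarrow> snd p < fst p \<and> even (fst p) \<and> odd (snd p)"

definition drop_ends_odd :: "nat \<times> nat \<Rightarrow> bool" where
  "drop_ends_odd p \<longleftrightarrow> (snd p < fst p \<longrightarrow> odd (snd p))"

definition count_eo_drops :: "nat list \<Rightarrow> nat" where
  "count_eo_drops xs = length (filter eo_drop (cyclic_pairs xs))"

definition insert_after :: "nat \<Rightarrow> 'a \<Rightarrow> 'a list \<Rightarrow> 'a list" where
  "insert_after i x xs = take (Suc i) xs @ x # drop (Suc i) xs"

definition odd_succ_positions :: "nat list \<Rightarrow> nat set" where
  "odd_succ_positions xs = {i. i < length xs \<and> odd (xs ! (Suc i mod length xs))}"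

lemma length_cyclic_pairs [simp]: "length (cyclic_pairs xs) = length xs"
  by (simp add: cyclic_pairs_def)

lemma nth_cyclic_pairs:
  "i < length xs \<Longrightarrow> cyclic_pairs xs ! i = (xs ! i, xs ! (Suc i mod length xs))"
  by (simp add: cyclic_pairs_def nth_rotate1)

lemma length_insert_after [simp]: "length (insert_after i x xs) = Suc (length xs)"
  by (simp add: insert_after_def)

lemma cyclic_pairs_insert_after:
  assumes "i < length xs"
  shows "cyclic_pairs (insert_after i x xs) =
    take i (cyclic_pairs xs) @ [(xs ! i, x), (x, xs ! (Suc i mod length xs))] @
    drop (Suc i) (cyclic_pairs xs)"
proof (rule nth_equalityI)
  fix j assume "j < length (cyclic_pairs (insert_after i x xs))"
  then have j: "j < Suc (length xs)" by simp
  have lhs: "cyclic_pairs (insert_after i x xs) ! j =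
      (insert_after i x xs ! j, insert_after i x xs ! (Suc j mod Suc (length xs)))"
    using j by (simp add: nth_cyclic_pairs)
  consider "j \<le> i" | "j = Suc i" | "Suc i < j" by linarith
  then show "cyclic_pairs (insert_after i x xs) ! j = (take i (cyclic_pairs xs) @
      [(xs ! i, x), (x, xs ! (Suc i mod length xs))] @ drop (Suc i) (cyclic_pairs xs)) ! j"
  proof cases
    case 1
    then show ?thesis unfolding lhs using assms j
      by (cases "j = i") (simp_all add: nth_cyclic_pairs insert_after_def nth_append min_def)
  next
    case 2
    then show ?thesis unfolding lhs using assms j
      by (cases "Suc i = length xs") (auto simp: nth_cyclic_pairs insert_after_def nth_append min_def)
  next
    case 3
    then have "Suc (Suc (j - 2)) = j" "Suc (Suc (length xs - 2)) = length xs"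
      using j by arith+
    with 3 show ?thesis unfolding lhs using assms j
      by (cases "j = length xs")
        (auto simp: nth_cyclic_pairs insert_after_def nth_append min_def nth_Cons' Suc_diff_Suc)
  qed
qed (use assms in simp)

lemma set_insert_after: "set (insert_after i x xs) = insert x (set xs)"
proof -
  have "set (take (Suc i) xs) \<union> set (drop (Suc i) xs) = set xs"
    by (metis append_take_drop_id set_append)
  then show ?thesis unfolding insert_after_def by auto
qed

lemma distinct_insert_after: "distinct (insert_after i x xs) \<longleftrightarrow> x \<notin> set xs \<and> distinct xs"
proof -
  let ?A = "take (Suc i) xs" and ?B = "drop (Suc i) xs"
  have "set xs = set ?A \<union> set ?B" by (metis append_take_drop_id set_append)
  moreover have "distinct xs \<longleftrightarrow> distinct (?A @ ?B)" by simp
  ultimately show ?thesis unfolding insert_after_def distinct_append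
    by (simp del: append_take_drop_id distinct_take distinct_drop) blast
qed

lemma hd_insert_after: "xs \<noteq> [] \<Longrightarrow> hd (insert_after i x xs) = hd xs"
  by (simp add: insert_after_def hd_append)

lemma insert_after_inj:
  assumes "x \<notin> set xs" "x \<notin> set ys" "i < length xs" "j < length ys"
    and "insert_after i x xs = insert_after j x ys"
  shows "i = j \<and> xs = ys"
proof -
  have "x \<notin> set (take (Suc i) xs)" "x \<notin> set (drop (Suc i) xs)"
    using assms(1) by (meson in_set_takeD, meson in_set_dropD)
  then have take_eq: "take (Suc i) xs = take (Suc j) ys" and "drop (Suc i) xs = drop (Suc j) ys"
    using assms(5) append_Cons_eq_iff unfolding insert_after_def by metis+
  then have "xs = ys" by (metis append_take_drop_id)
  moreover have "i = j" using take_eq assms(3,4) by (metis Suc_inject length_take min_absorb2 Suc_leI)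
  ultimately show ?thesis by simp
qed

lemma count_eo_drops_insert_after:
  assumes "i < length xs" and "xs ! i < x"
  shows "count_eo_drops (insert_after i x xs) + (if eo_drop (cyclic_pairs xs ! i) then 1 else 0)
       = count_eo_drops xs + (if eo_drop (x, xs ! (Suc i mod length xs)) then 1 else 0)"
proof -
  have decomp: "cyclic_pairs xs = take i (cyclic_pairs xs) @ cyclic_pairs xs ! i # drop (Suc i) (cyclic_pairs xs)"
    using assms(1) by (simp add: id_take_nth_drop)
  have "count_eo_drops xs = length (filter eo_drop (take i (cyclic_pairs xs)))
      + (if eo_drop (cyclic_pairs xs ! i) then 1 else 0) + length (filter eo_drop (drop (Suc i) (cyclic_pairs xs)))"
    unfolding count_eo_drops_def by (subst decomp) simp
  then show ?thesis
    using assms by (simp add: count_eo_drops_def cyclic_pairs_insert_after eo_drop_def)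
qed

lemma drops_end_odd_insert_after:
  assumes "i < length xs" and "xs ! i < x" and "xs ! (Suc i mod length xs) < x"
  shows "(\<forall>p \<in> set (cyclic_pairs (insert_after i x xs)). drop_ends_odd p) \<longleftrightarrow>
    (\<forall>p \<in> set (cyclic_pairs xs). drop_ends_odd p) \<and> odd (xs ! (Suc i mod length xs))"
proof -
  have "cyclic_pairs xs = take i (cyclic_pairs xs) @ cyclic_pairs xs ! i # drop (Suc i) (cyclic_pairs xs)"
    using assms(1) by (simp add: id_take_nth_drop)
  then have "set (cyclic_pairs xs) =
      set (take i (cyclic_pairs xs)) \<union> {cyclic_pairs xs ! i} \<union> set (drop (Suc i) (cyclic_pairs xs))"
    by (metis Un_insert_right insert_is_Un list.simps(15) set_append sup_commute)
  then show ?thesis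
    unfolding cyclic_pairs_insert_after[OF assms(1)] using assms
    by (auto simp: drop_ends_odd_def nth_cyclic_pairs)
qed

text \<open>For the one-element cycle the only cyclic pair is \<open>(1, 1)\<close>, which is no drop; so the
  special clauses for \<open>[(1)]\<close> in \<^const>\<open>drop_eo\<close> and \<^const>\<open>cycles_o\<close> need no
  separate treatment in the pair-based descriptions below.\<close>

lemma cycles_o_iff_cyclic_pairs:
  "cycles_o n = {xs \<in> cycles n. \<forall>p \<in> set (cyclic_pairs xs). drop_ends_odd p}"
proof -
  have "(\<forall>p \<in> set (cyclic_pairs xs). drop_ends_odd p) \<longleftrightarrow>
     (length xs \<noteq> 1 \<longrightarrow> (\<forall>i < length xs. is_drop xs i \<longrightarrow> odd (xs ! ((i + 1) mod length xs))))"
    for xs :: "nat list"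
  proof -
    have "(\<forall>p \<in> set (cyclic_pairs xs). drop_ends_odd p) \<longleftrightarrow>
        (\<forall>i < length xs. drop_ends_odd (cyclic_pairs xs ! i))"
      by (simp add: all_set_conv_all_nth)
    also have "\<dots> \<longleftrightarrow> (\<forall>i < length xs. is_drop xs i \<longrightarrow> odd (xs ! ((i + 1) mod length xs)))"
      by (simp add: nth_cyclic_pairs drop_ends_odd_def is_drop_def)
    finally have "(\<forall>p \<in> set (cyclic_pairs xs). drop_ends_odd p) \<longleftrightarrow>
        (\<forall>i < length xs. is_drop xs i \<longrightarrow> odd (xs ! ((i + 1) mod length xs)))" .
    then show ?thesis
      by (cases "length xs = 1") (auto simp: is_drop_def)
  qed
  then show ?thesis unfolding cycles_o_def by auto
qed

lemma drop_eo_eq_count_eo_drops: "drop_eo xs = count_eo_drops xs"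
proof (cases "length xs = 1")
  case True
  then obtain a where "xs = [a]" by (cases xs) auto
  then show ?thesis by (simp add: drop_eo_def count_eo_drops_def cyclic_pairs_def eo_drop_def)
next
  case False
  have "count_eo_drops xs = card {i. i < length xs \<and> eo_drop (cyclic_pairs xs ! i)}"
    by (simp add: count_eo_drops_def length_filter_conv_card)
  also have "\<dots> = card {i. i < length xs \<and> is_drop xs i \<and> even (xs ! i)
              \<and> odd (xs ! ((i + 1) mod length xs))}"
    by (rule arg_cong[where f = card]) (auto simp: nth_cyclic_pairs eo_drop_def is_drop_def)
  finally show ?thesis using False by (simp add: drop_eo_def)
qed

lemma g_cycles_o: "g n = (\<Sum>xs \<in> cycles_o n. monom 1 (count_eo_drops xs))"
  by (simp add: g_def drop_eo_eq_count_eo_drops)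

lemma length_cycles: "xs \<in> cycles n \<Longrightarrow> length xs = n"
  unfolding cycles_def by (metis (mono_tags) card_atLeastAtMost diff_Suc_1 distinct_card mem_Collect_eq)

lemma cycles_nth_less: "xs \<in> cycles n \<Longrightarrow> i < n \<Longrightarrow> xs ! i < Suc n"
  using length_cycles[of xs n] unfolding cycles_def
  by (metis (mono_tags) atLeastAtMost_iff le_imp_less_Suc mem_Collect_eq nth_mem)

lemma finite_cycles: "finite (cycles n)"
proof (rule finite_subset)
  show "cycles n \<subseteq> {xs. set xs \<subseteq> {1..n} \<and> length xs \<le> n}"
    using length_cycles by (auto simp: cycles_def)
qed (rule finite_lists_length_le, simp)

lemma cycles_o_subset: "cycles_o n \<subseteq> cycles n"
  by (auto simp: cycles_o_def)

lemma finite_cycles_o: "finite (cycles_o n)"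
  by (rule finite_subset[OF cycles_o_subset finite_cycles])

lemma cycles_o_1: "cycles_o 1 = {[1]}"
proof -
  have "xs = [1]" if xs: "xs \<in> cycles 1" for xs
  proof -
    have "length xs = 1" "hd xs = 1" using length_cycles[OF xs] xs by (auto simp: cycles_def)
    then show ?thesis by (cases xs) auto
  qed
  moreover have "[1] \<in> cycles_o 1" by (simp add: cycles_o_def cycles_def)
  ultimately show ?thesis using cycles_o_subset by blast
qed

lemma insert_after_in_cycles:
  assumes xs: "xs \<in> cycles n" and i: "i < n"
  shows "insert_after i (Suc n) xs \<in> cycles (Suc n)"
proof -
  have "distinct xs" "set xs = {1..n}" "hd xs = 1" "xs \<noteq> []"
    using xs i by (auto simp: cycles_def)
  then show ?thesis
    by (simp add: cycles_def set_insert_after distinct_insert_after hd_insert_after atLeastAtMostSuc_conv)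
qed

lemma cycles_Suc_eq_insert_after:
  assumes ys: "ys \<in> cycles (Suc n)" and n: "n \<ge> 1"
  obtains xs i where "xs \<in> cycles n" "i < n" "ys = insert_after i (Suc n) xs"
proof -
  have dist: "distinct ys" and set_ys: "set ys = {1..Suc n}" and hd_ys: "hd ys = 1"
    and len: "length ys = Suc n"
    using ys length_cycles[OF ys] by (auto simp: cycles_def)
  have "Suc n \<in> set ys" using set_ys by simp
  then obtain k where k: "k < Suc n" "ys ! k = Suc n" using len by (auto simp: in_set_conv_nth)
  have "ys \<noteq> []" using len by auto
  then have "ys ! 0 = 1" using hd_ys by (simp add: hd_conv_nth)
  then have "k \<noteq> 0" using k(2) n by (cases k) simp_all
  then obtain i where i: "k = Suc i" by (cases k) auto
  define xs where "xs = take k ys @ drop (Suc k) ys"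
  have "ys = take k ys @ ys ! k # drop (Suc k) ys"
    using k len by (intro id_take_nth_drop) simp
  then have ys_eq: "ys = insert_after i (Suc n) xs"
    using k i len unfolding insert_after_def xs_def by simp
  then have "Suc n \<notin> set xs" "distinct xs"
    using dist by (simp_all add: distinct_insert_after)
  moreover have "set xs = {1..n}"
    using set_ys ys_eq \<open>Suc n \<notin> set xs\<close>
    by (simp add: set_insert_after atLeastAtMostSuc_conv insert_ident)
  moreover have "hd xs = 1"
    using hd_ys \<open>ys \<noteq> []\<close> i unfolding xs_def by (simp add: hd_append)
  ultimately have "xs \<in> cycles n" by (simp add: cycles_def)
  with that ys_eq k i show ?thesis by simp
qed

subsection \<open>Inserting the new maximum\<close>

lemma cycles_o_Suc_eq_image:
  assumes n: "n \<ge> 1"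
  shows "cycles_o (Suc n) =
    (\<lambda>(xs, i). insert_after i (Suc n) xs) ` (SIGMA xs:cycles_o n. odd_succ_positions xs)"
proof -
  have iff: "insert_after i (Suc n) xs \<in> cycles_o (Suc n) \<longleftrightarrow>
      xs \<in> cycles_o n \<and> i \<in> odd_succ_positions xs"
    if xs: "xs \<in> cycles n" and i: "i < n" for xs i
  proof -
    have "length xs = n" using length_cycles[OF xs] .
    moreover have "xs ! i < Suc n" "xs ! (Suc i mod n) < Suc n"
      using cycles_nth_less[OF xs] i by simp_all
    ultimately show ?thesis
      using drops_end_odd_insert_after[of i xs "Suc n"] insert_after_in_cycles[OF xs i] xs i
      by (auto simp: cycles_o_iff_cyclic_pairs odd_succ_positions_def)
  qed
  show ?thesis
  proof (intro set_eqI iffI)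
    fix ys assume ys: "ys \<in> cycles_o (Suc n)"
    then obtain xs i where "xs \<in> cycles n" "i < n" "ys = insert_after i (Suc n) xs"
      using cycles_Suc_eq_insert_after[OF _ n] by (auto simp: cycles_o_def)
    with ys iff show "ys \<in> (\<lambda>(xs, i). insert_after i (Suc n) xs) ` (SIGMA xs:cycles_o n. odd_succ_positions xs)"
      by (auto intro!: image_eqI[where x = "(xs, i)"])
  next
    fix ys assume "ys \<in> (\<lambda>(xs, i). insert_after i (Suc n) xs) ` (SIGMA xs:cycles_o n. odd_succ_positions xs)"
    then obtain xs i where "xs \<in> cycles_o n" "i \<in> odd_succ_positions xs" "ys = insert_after i (Suc n) xs"
      by auto
    moreover from this have "xs \<in> cycles n" "i < n"
      by (auto simp: cycles_o_def odd_succ_positions_def length_cycles)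
    ultimately show "ys \<in> cycles_o (Suc n)"
      using iff by blast
  qed
qed

lemma inj_on_insert_after:
  "inj_on (\<lambda>(xs, i). insert_after i (Suc n) xs) (SIGMA xs:cycles_o n. odd_succ_positions xs)"
proof (rule inj_onI, clarsimp)
  fix xs i ys j
  assume "xs \<in> cycles_o n" "ys \<in> cycles_o n" "i \<in> odd_succ_positions xs" "j \<in> odd_succ_positions ys"
    and "insert_after i (Suc n) xs = insert_after j (Suc n) ys"
  then show "xs = ys \<and> i = j"
    using insert_after_inj[of "Suc n" xs ys i j]
    by (auto simp: cycles_o_def cycles_def odd_succ_positions_def)
qed

lemma card_odd_atLeastAtMost: "card {v \<in> {1..n::nat}. odd v} = Suc n div 2"
proof (induction n)
  case (Suc n)
  have "{v \<in> {1..Suc n}. odd v} = (if odd (Suc n) then insert (Suc n) else id) {v \<in> {1..n}. odd v}"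
    by (auto simp: atLeastAtMostSuc_conv)
  then show ?case using Suc by auto
qed simp

lemma card_odd_succ_positions:
  assumes "xs \<in> cycles n"
  shows "card (odd_succ_positions xs) = Suc n div 2"
proof -
  have "distinct xs" "set xs = {1..n}" using assms by (auto simp: cycles_def)
  have "card (odd_succ_positions xs) = length (filter odd (rotate1 xs))"
    by (simp add: odd_succ_positions_def length_filter_conv_card nth_rotate1 cong: conj_cong)
  also have "\<dots> = card (set (filter odd (rotate1 xs)))"
    using \<open>distinct xs\<close> by (simp add: distinct_card[symmetric])
  also have "\<dots> = card {v \<in> {1..n}. odd v}"
    using \<open>set xs = {1..n}\<close> by (simp add: Collect_conj_eq Int_commute)
  finally show ?thesis by (simp only: card_odd_atLeastAtMost)
qed

lemma finite_odd_succ_positions: "finite (odd_succ_positions xs)"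
  by (rule finite_subset[of _ "{..<length xs}"]) (auto simp: odd_succ_positions_def)

lemma card_eo_drop_positions:
  "card (odd_succ_positions xs \<inter> {i. eo_drop (cyclic_pairs xs ! i)}) = count_eo_drops xs"
proof -
  have "odd_succ_positions xs \<inter> {i. eo_drop (cyclic_pairs xs ! i)} =
      {i. i < length (cyclic_pairs xs) \<and> eo_drop (cyclic_pairs xs ! i)}"
    by (auto simp: odd_succ_positions_def nth_cyclic_pairs eo_drop_def)
  then show ?thesis by (simp add: count_eo_drops_def length_filter_conv_card)
qed

lemma count_eo_drops_insert_max:
  assumes xs: "xs \<in> cycles n" and i: "i \<in> odd_succ_positions xs"
  shows "count_eo_drops (insert_after i (Suc n) xs) + (if eo_drop (cyclic_pairs xs ! i) then 1 else 0)
       = count_eo_drops xs + (if even (Suc n) then 1 else 0)"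
proof -
  have "i < length xs" "odd (xs ! (Suc i mod length xs))"
    using i by (auto simp: odd_succ_positions_def)
  moreover have "xs ! i < Suc n" "xs ! (Suc i mod length xs) < Suc n"
    using cycles_nth_less[OF xs] \<open>i < length xs\<close> length_cycles[OF xs] by simp_all
  ultimately have "eo_drop (Suc n, xs ! (Suc i mod length xs)) \<longleftrightarrow> even (Suc n)"
    by (simp add: eo_drop_def)
  then show ?thesis
    using count_eo_drops_insert_after[OF \<open>i < length xs\<close> \<open>xs ! i < Suc n\<close>] by (simp only:)
qed

lemma sum_monom_insert_max:
  assumes xs: "xs \<in> cycles n"
  defines "d \<equiv> count_eo_drops xs" and "e \<equiv> if even (Suc n) then 1 else 0"
  shows "(\<Sum>i \<in> odd_succ_positions xs. monom (1::'a::comm_ring_1) (count_eo_drops (insert_after i (Suc n) xs)))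
    = monom (of_nat d) (d + e - 1) + monom (of_nat (Suc n div 2) - of_nat d) (d + e)"
proof -
  let ?S = "odd_succ_positions xs" and ?E = "{i. eo_drop (cyclic_pairs xs ! i)}"
  have fin: "finite ?S" by (rule finite_odd_succ_positions)
  have card_SE: "card (?S \<inter> ?E) = d"
    unfolding d_def by (rule card_eo_drop_positions)
  have card_S: "card ?S = Suc n div 2" using card_odd_succ_positions[OF xs] .
  have "?S \<inter> - ?E = ?S - ?S \<inter> ?E" by blast
  then have card_S_E: "card (?S \<inter> - ?E) = Suc n div 2 - d"
    using fin card_SE card_S by (simp add: card_Diff_subset)
  have "d \<le> Suc n div 2" using card_SE card_S fin by (metis Int_lower1 card_mono)
  have "d \<ge> 1" if "i \<in> ?S \<inter> ?E" for i
    using that card_SE fin card_gt_0_iff[of "?S \<inter> ?E"] by auto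
  then have "count_eo_drops (insert_after i (Suc n) xs) =
      (if eo_drop (cyclic_pairs xs ! i) then d + e - 1 else d + e)" if "i \<in> ?S" for i
    using count_eo_drops_insert_max[OF xs that] that by (auto simp: d_def e_def)
  then have "(\<Sum>i \<in> ?S. monom (1::'a) (count_eo_drops (insert_after i (Suc n) xs)))
      = (\<Sum>i \<in> ?S. if eo_drop (cyclic_pairs xs ! i) then monom 1 (d + e - 1) else monom 1 (d + e))"
    by (intro sum.cong) simp_all
  also have "\<dots> = (\<Sum>i \<in> ?S \<inter> ?E. monom 1 (d + e - 1)) + (\<Sum>i \<in> ?S \<inter> - ?E. monom 1 (d + e))"
    by (rule sum.If_cases[OF fin])
  also have "\<dots> = monom (of_nat d) (d + e - 1) + monom (of_nat (Suc n div 2) - of_nat d) (d + e)"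
    using \<open>d \<le> Suc n div 2\<close> card_SE card_S_E by (simp add: of_nat_poly smult_monom of_nat_diff)
  finally show ?thesis .
qed

lemma g_Suc:
  assumes "n \<ge> 1"
  defines "e \<equiv> if even (Suc n) then 1 else 0"
  shows "g (Suc n) = (\<Sum>xs \<in> cycles_o n. monom (of_nat (count_eo_drops xs)) (count_eo_drops xs + e - 1)
      + monom (of_nat (Suc n div 2) - of_nat (count_eo_drops xs)) (count_eo_drops xs + e))"
proof -
  have "g (Suc n) = (\<Sum>ys \<in> cycles_o (Suc n). monom 1 (count_eo_drops ys))"
    by (rule g_cycles_o)
  also have "\<dots> = (\<Sum>(xs, i) \<in> (SIGMA xs:cycles_o n. odd_succ_positions xs).
      monom 1 (count_eo_drops (insert_after i (Suc n) xs)))"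
    unfolding cycles_o_Suc_eq_image[OF assms(1)]
    by (subst sum.reindex[OF inj_on_insert_after]) (simp add: case_prod_beta o_def)
  also have "\<dots> = (\<Sum>xs \<in> cycles_o n. \<Sum>i \<in> odd_succ_positions xs.
      monom 1 (count_eo_drops (insert_after i (Suc n) xs)))"
    by (rule sum.Sigma[symmetric]) (auto simp: finite_cycles_o finite_odd_succ_positions)
  also have "\<dots> = (\<Sum>xs \<in> cycles_o n. monom (of_nat (count_eo_drops xs)) (count_eo_drops xs + e - 1)
      + monom (of_nat (Suc n div 2) - of_nat (count_eo_drops xs)) (count_eo_drops xs + e))"
    unfolding e_def using cycles_o_subset by (intro sum.cong refl sum_monom_insert_max) blast
  finally show ?thesis .
qed

subsection \<open>The differential recurrences\<close>

lemma pderiv_sum: "pderiv (sum f A) = (\<Sum>x \<in> A. pderiv (f x))"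
  using higher_pderiv_sum[of 1 f A] by simp

lemma smult_sum_right: "smult c (sum f A) = (\<Sum>x \<in> A. smult c (f x))"
  by (induction A rule: infinite_finite_induct) (simp_all add: smult_add_right)

lemma even_step_monom:
  fixes c :: "'a::idom"
  shows "smult c ([:0,1:] * monom 1 d) - [:0,0,1:] * pderiv (monom 1 d) + [:0,1:] * pderiv (monom 1 d)
     = monom (of_nat d) d + monom (c - of_nat d) (Suc d)"
  by (cases d) (auto intro!: poly_eqI simp: coeff_pCons pderiv_monom algebra_simps split: nat.split)

lemma odd_step_monom:
  fixes c :: "'a::idom"
  shows "smult c (monom 1 d) - [:0,1:] * pderiv (monom 1 d) + pderiv (monom 1 d)
     = monom (of_nat d) (d - 1) + monom (c - of_nat d) d"
  by (cases d) (auto intro!: poly_eqI simp: coeff_pCons pderiv_monom algebra_simps split: nat.split)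

lemma g_1: "g 1 = 1"
  unfolding g_def cycles_o_1 by (simp add: drop_eo_def)

lemma g_even:
  assumes "n \<ge> 1"
  shows "g (2*n) = smult (of_nat n) ([:0,1:] * g (2*n-1))
                 - [:0,0,1:] * pderiv (g (2*n-1)) + [:0,1:] * pderiv (g (2*n-1))"
proof -
  have n: "2*n = Suc (2*n-1)" "2*n-1 \<ge> 1" "Suc (2*n-1) div 2 = n" using assms by auto
  have "g (2*n) = (\<Sum>xs \<in> cycles_o (2*n-1).
      monom (of_nat (count_eo_drops xs)) (count_eo_drops xs)
      + monom (of_nat n - of_nat (count_eo_drops xs)) (Suc (count_eo_drops xs)))"
    using g_Suc[OF n(2)] n by simp
  also have "\<dots> = (\<Sum>xs \<in> cycles_o (2*n-1). smult (of_nat n) ([:0,1:] * monom 1 (count_eo_drops xs))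
      - [:0,0,1:] * pderiv (monom 1 (count_eo_drops xs)) + [:0,1:] * pderiv (monom 1 (count_eo_drops xs)))"
    by (simp only: even_step_monom)
  also have "\<dots> = smult (of_nat n) ([:0,1:] * g (2*n-1))
                 - [:0,0,1:] * pderiv (g (2*n-1)) + [:0,1:] * pderiv (g (2*n-1))"
    by (simp only: g_cycles_o pderiv_sum smult_sum_right sum_distrib_left sum_subtractf sum.distrib)
  finally show ?thesis .
qed

lemma g_odd:
  assumes "n \<ge> 1"
  shows "g (2*n+1) = smult (of_nat n) (g (2*n)) - [:0,1:] * pderiv (g (2*n)) + pderiv (g (2*n))"
proof -
  have n: "2*n+1 = Suc (2*n)" "2*n \<ge> 1" "Suc (2*n) div 2 = n" using assms by auto
  have "g (2*n+1) = (\<Sum>xs \<in> cycles_o (2*n).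
      monom (of_nat (count_eo_drops xs)) (count_eo_drops xs - 1)
      + monom (of_nat n - of_nat (count_eo_drops xs)) (count_eo_drops xs))"
    using g_Suc[OF n(2)] n by simp
  also have "\<dots> = (\<Sum>xs \<in> cycles_o (2*n). smult (of_nat n) (monom 1 (count_eo_drops xs))
      - [:0,1:] * pderiv (monom 1 (count_eo_drops xs)) + pderiv (monom 1 (count_eo_drops xs)))"
    by (simp only: odd_step_monom)
  also have "\<dots> = smult (of_nat n) (g (2*n)) - [:0,1:] * pderiv (g (2*n)) + pderiv (g (2*n))"
    by (simp only: g_cycles_o pderiv_sum smult_sum_right sum_distrib_left sum_subtractf sum.distrib)
  finally show ?thesis .
qed

theorem lemma4p1:
  shows "g 1 = 1 \<and>
    (\<forall>n::nat. n \<ge> 1 \<longrightarrow>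
       g (2*n) = smult (of_nat n) ([:0,1:] * g (2*n-1))
                 - [:0,0,1:] * pderiv (g (2*n-1)) + [:0,1:] * pderiv (g (2*n-1)) \<and>
       g (2*n+1) = smult (of_nat n) (g (2*n))
                 - [:0,1:] * pderiv (g (2*n)) + pderiv (g (2*n)))"
  using g_1 g_even g_odd by blast

end
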